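(* Let $q=1$, $n\in\mathbb N$, let $a<b$ and let $s_0,\dots,s_{2n+1}$ be real numbers such that $H_{1,n},H_{2,n-1},K_{1,n},K_{2,n}$ are positive definite. Then $$\widetilde l_0=\frac{(E^{(2)}_{a,0})^2}{H_{2,0}},\qquad \widetilde m_0=\frac{1}{bs_0-s_1},$$ $$\widetilde l_j=\frac{(\det E^{(2)}_{a,j})^2}{\det H_{2,j}\,\det H_{2,j-1}}\ \ (1\le j\le n-1),\qquad \widetilde m_j=\frac{(\det D^{(3)}_{a,j})^2}{\det K_{1,j}\,\det K_{1,j-1}}\ \ (1\le j\le n).$$
   Context: Let $\widehat s_j:=-ab\,s_j+(a+b)s_{j+1}-s_{j+2}$, $H_{1,j}:=(s_{l+k})_{l,k=0}^j$, $H_{2,j}:=(\widehat s_{l+k})_{l,k=0}^{j}$, $K_{1,j}:=(bs_{l+k}-s_{l+k+1})_{l,k=0}^{j}$, $K_{2,j}:=(-as_{l+k}+s_{l+k+1})_{l,k=0}^j$ (real symmetric $(j+1)\times(j+1)$ matrices). Let $T_0:=0$ and for $j\ge1$ let $T_j$ be the $(j+1)\times(j+1)$ matrix with ones in positions $(l+1,l)$, $l=0,\dots,j-1$, zeros elsewhere; $R_j(x):=(I-xT_j)^{-1}$; $v_j:=(1,0,\dots,0)^{\top}\in\mathbb R^{j+1}$; $u_{2,0}:=-(a+b)s_0+s_1$, $u_{2,j}:=(u_{2,0},-\widehat s_0,\dots,-\widehat s_{j-1})^{\top}$. Scalar DSM parameters: $\lambda_j:=(u_{2,j}+av_js_0)^{\top}R_j(a)^{\top}H_{2,j}^{-1}R_j(a)(u_{2,j}+av_js_0)$,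 $\mu_j:=v_j^{\top}R_j(a)^{\top}K_{1,j}^{-1}R_j(a)v_j$; $\widetilde l_0:=\lambda_0$, $\widetilde l_j:=\lambda_j-\lambda_{j-1}$; $\widetilde m_0:=\mu_0$, $\widetilde m_j:=\mu_j-\mu_{j-1}$. Determinant matrices: with $s^{(3)}_k:=bs_k-s_{k+1}$ and $s^{(2)}_k:=\widehat s_k$, $D^{(3)}_{x,j}$ is the $(j+1)\times(j+1)$ matrix whose rows $0,\dots,j-1$ are $(s^{(3)}_{i},s^{(3)}_{i+1},\dots,s^{(3)}_{i+j})$, $i=0,\dots,j-1$, and whose last row is $(1,x,\dots,x^j)$; $E^{(2)}_{x,j}$ is the $(j+1)\times(j+1)$ matrix whose rows $0,\dots,j-1$ are $(s^{(2)}_{i},\dots,s^{(2)}_{i+j})$, $i=0,\dots,j-1$, and whose last row is $(e_{2,0}(x),\dots,e_{2,j}(x)):=-(u_{2,j}^{\top}+x\,s_0v_j^{\top})R_j(x)^{\top}$. For $j=0$, $E^{(2)}_{a,0}=e_{2,0}(a)=-(u_{2,0}+as_0)$ and $H_{2,0}=\widehat s_0$. *)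

theory Defs
  imports "Jordan_Normal_Form.Determinant"
begin

definition hankel :: "nat \<Rightarrow> (nat \<Rightarrow> real) \<Rightarrow> real mat" where
  "hankel j f = mat (Suc j) (Suc j) (\<lambda>(l,k). f (l + k))"

definition pos_def_mat :: "real mat \<Rightarrow> bool" where
  "pos_def_mat A \<longleftrightarrow> (\<exists>m. A \<in> carrier_mat m m \<and> transpose_mat A = A \<and>
      (\<forall>x \<in> carrier_vec m. x \<noteq> 0\<^sub>v m \<longrightarrow> x \<bullet> (A *\<^sub>v x) > 0))"

definition mat_inv :: "real mat \<Rightarrow> real mat" where
  "mat_inv A = (THE B. B \<in> carrier_mat (dim_row A) (dim_row A) \<and>
                       A * B = 1\<^sub>m (dim_row A) \<and> B * A = 1\<^sub>m (dim_row A))"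

definition s_hat :: "real \<Rightarrow> real \<Rightarrow> (nat \<Rightarrow> real) \<Rightarrow> nat \<Rightarrow> real" where
  "s_hat a b s j = - a * b * s j + (a + b) * s (j + 1) - s (j + 2)"

definition H1 :: "(nat \<Rightarrow> real) \<Rightarrow> nat \<Rightarrow> real mat" where
  "H1 s j = hankel j s"
definition H2 :: "real \<Rightarrow> real \<Rightarrow> (nat \<Rightarrow> real) \<Rightarrow> nat \<Rightarrow> real mat" where
  "H2 a b s j = hankel j (s_hat a b s)"
definition K1 :: "real \<Rightarrow> (nat \<Rightarrow> real) \<Rightarrow> nat \<Rightarrow> real mat" where
  "K1 b s j = hankel j (\<lambda>k. b * s k - s (k + 1))"
definition K2 :: "real \<Rightarrow> (nat \<Rightarrow> real) \<Rightarrow> nat \<Rightarrow> real mat" where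
  "K2 a s j = hankel j (\<lambda>k. - a * s k + s (k + 1))"

definition T :: "nat \<Rightarrow> real mat" where
  "T j = mat (Suc j) (Suc j) (\<lambda>(r,c). if r = c + 1 then 1 else 0)"

definition R :: "nat \<Rightarrow> real \<Rightarrow> real mat" where
  "R j x = mat_inv (1\<^sub>m (Suc j) - x \<cdot>\<^sub>m T j)"

definition v :: "nat \<Rightarrow> real vec" where
  "v j = vec (Suc j) (\<lambda>i. if i = 0 then 1 else 0)"

definition u20 :: "real \<Rightarrow> real \<Rightarrow> (nat \<Rightarrow> real) \<Rightarrow> real" where
  "u20 a b s = - (a + b) * s 0 + s 1"

definition u2 :: "real \<Rightarrow> real \<Rightarrow> (nat \<Rightarrow> real) \<Rightarrow> nat \<Rightarrow> real vec" where
  "u2 a b s j = vec (Suc j) (\<lambda>i. if i = 0 then u20 a b s else - s_hat a b s (i - 1))"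

definition lam :: "real \<Rightarrow> real \<Rightarrow> (nat \<Rightarrow> real) \<Rightarrow> nat \<Rightarrow> real" where
  "lam a b s j = (let w = u2 a b s j + (a * s 0) \<cdot>\<^sub>v v j in
     w \<bullet> ((transpose_mat (R j a) * mat_inv (H2 a b s j) * R j a) *\<^sub>v w))"

definition mu :: "real \<Rightarrow> real \<Rightarrow> (nat \<Rightarrow> real) \<Rightarrow> nat \<Rightarrow> real" where
  "mu a b s j = v j \<bullet> ((transpose_mat (R j a) * mat_inv (K1 b s j) * R j a) *\<^sub>v v j)"

definition l_tilde :: "real \<Rightarrow> real \<Rightarrow> (nat \<Rightarrow> real) \<Rightarrow> nat \<Rightarrow> real" where
  "l_tilde a b s j = (if j = 0 then lam a b s 0 else lam a b s j - lam a b s (j - 1))"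

definition m_tilde :: "real \<Rightarrow> real \<Rightarrow> (nat \<Rightarrow> real) \<Rightarrow> nat \<Rightarrow> real" where
  "m_tilde a b s j = (if j = 0 then mu a b s 0 else mu a b s j - mu a b s (j - 1))"

definition D3 :: "real \<Rightarrow> (nat \<Rightarrow> real) \<Rightarrow> real \<Rightarrow> nat \<Rightarrow> real mat" where
  "D3 b s x j = mat (Suc j) (Suc j)
     (\<lambda>(r,c). if r < j then b * s (r + c) - s (r + c + 1) else x ^ c)"

definition e2 :: "real \<Rightarrow> real \<Rightarrow> (nat \<Rightarrow> real) \<Rightarrow> real \<Rightarrow> nat \<Rightarrow> real vec" where
  "e2 a b s x j = row (- (mat_of_rows (Suc j) [u2 a b s j + (x * s 0) \<cdot>\<^sub>v v j]
                          * transpose_mat (R j x))) 0"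

definition E2 :: "real \<Rightarrow> real \<Rightarrow> (nat \<Rightarrow> real) \<Rightarrow> real \<Rightarrow> nat \<Rightarrow> real mat" where
  "E2 a b s x j = mat (Suc j) (Suc j)
     (\<lambda>(r,c). if r < j then s_hat a b s (r + c) else e2 a b s x j $ c)"

end

theory Submission
  imports Defs
begin

(* If A is symmetric of size m+1 and its leading m x m section A' is nonsingular, then bordering A'
   to A increases the quadratic form y^T A^-1 y by det(B)^2 / (det A * det A'), where B is A with its
   last row replaced by y^T: split y along A(x' @ 0) and the last unit vector and apply Cramer's rule
   twice. The matrix R_j(a) = (I - a T_j)^-1 is the lower triangular Toeplitz matrix of the powers of a,
   so lambda_j and mu_j are such quadratic forms for the Hankel matrices H_{2,j}, K_{1,j} and the vectors
   e_2(a) and (1, a, ..., a^j), whose first j entries do not depend on j. Hence the differences of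
   consecutive parameters are the stated quotients; positive definiteness of H_{2,n-1} and K_{1,n}
   makes all their leading sections nonsingular. *)

lemma mat_inv_eqI:
  fixes A B :: "real mat"
  assumes A: "A \<in> carrier_mat n n" and B: "B \<in> carrier_mat n n" and AB: "A * B = 1\<^sub>m n"
  shows "mat_inv A = B"
  unfolding mat_inv_def
proof (rule the_equality)
  have BA: "B * A = 1\<^sub>m n" using mat_mult_left_right_inverse[OF A B AB] .
  show "B \<in> carrier_mat (dim_row A) (dim_row A) \<and> A * B = 1\<^sub>m (dim_row A) \<and> B * A = 1\<^sub>m (dim_row A)"
    using A B AB BA by auto
next
  fix C assume "C \<in> carrier_mat (dim_row A) (dim_row A) \<and> A * C = 1\<^sub>m (dim_row A) \<and> C * A = 1\<^sub>m (dim_row A)"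
  then have C: "C \<in> carrier_mat n n" and CA: "C * A = 1\<^sub>m n" using A by auto
  have "C = C * (A * B)" using C by (simp add: AB)
  also have "\<dots> = (C * A) * B" using A B C by simp
  finally show "C = B" using B CA by simp
qed

lemma mat_inv_correct:
  fixes A :: "real mat"
  assumes A: "A \<in> carrier_mat n n" and "det A \<noteq> 0"
  shows "mat_inv A \<in> carrier_mat n n" and "A * mat_inv A = 1\<^sub>m n" and "mat_inv A * A = 1\<^sub>m n"
proof -
  obtain B where B: "B \<in> carrier_mat n n" "A * B = 1\<^sub>m n" "B * A = 1\<^sub>m n"
    using det_non_zero_imp_unit[OF assms, of "()"] unfolding Units_def ring_mat_def by auto
  with mat_inv_eqI[OF A B(1,2)]
  show "mat_inv A \<in> carrier_mat n n" "A * mat_inv A = 1\<^sub>m n" "mat_inv A * A = 1\<^sub>m n" by simp_all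
qed

lemma mult_mat_inv_vec:
  fixes A :: "real mat"
  assumes A: "A \<in> carrier_mat n n" and "det A \<noteq> 0" and y: "y \<in> carrier_vec n"
  shows "A *\<^sub>v (mat_inv A *\<^sub>v y) = y" and "mat_inv A *\<^sub>v (A *\<^sub>v y) = y"
  using mat_inv_correct[OF assms(1,2)] A y by (simp_all flip: assoc_mult_mat_vec)

lemma transpose_mat_inv_symmetric:
  fixes A :: "real mat"
  assumes A: "A \<in> carrier_mat n n" and sym: "transpose_mat A = A" and "det A \<noteq> 0"
  shows "transpose_mat (mat_inv A) = mat_inv A"
proof -
  note inv = mat_inv_correct[OF A \<open>det A \<noteq> 0\<close>]
  have "A * transpose_mat (mat_inv A) = transpose_mat (mat_inv A * A)"
    using transpose_mult[OF inv(1) A] sym by simp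
  then have "mat_inv A = transpose_mat (mat_inv A)"
    using inv A by (intro mat_inv_eqI) auto
  then show ?thesis by simp
qed

lemma mult_mat_vec_zero_extension:
  fixes A B :: "'a :: comm_ring_1 mat"
  assumes A: "A \<in> carrier_mat n n" and B: "B \<in> carrier_mat k k" and "k \<le> n"
    and AB: "\<And>i l. i < k \<Longrightarrow> l < k \<Longrightarrow> A $$ (i, l) = B $$ (i, l)"
    and x: "x \<in> carrier_vec k"
  shows "vec_first (A *\<^sub>v (x @\<^sub>v 0\<^sub>v (n - k))) k = B *\<^sub>v x"
proof (rule eq_vecI)
  fix i assume "i < dim_vec (B *\<^sub>v x)"
  then have i: "i < k" using B by simp
  have row: "row A i = vec_first (row A i) k @\<^sub>v vec_last (row A i) (n - k)"
    using A \<open>k \<le> n\<close> by (intro vec_first_last_append[symmetric]) auto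
  have "vec_first (row A i) k = row B i"
    using A B AB i \<open>k \<le> n\<close> by (intro eq_vecI) (auto simp: vec_first_def)
  then have "row A i \<bullet> (x @\<^sub>v 0\<^sub>v (n - k)) = row B i \<bullet> x"
    using x B i by (subst row) (simp add: scalar_prod_append[of _ k _ "n - k"])
  then show "vec_first (A *\<^sub>v (x @\<^sub>v 0\<^sub>v (n - k))) k $ i = (B *\<^sub>v x) $ i"
    using A B i \<open>k \<le> n\<close> by (simp add: vec_first_def)
qed (use B in auto)

lemma quadratic_form_zero_extension:
  fixes A B :: "'a :: comm_ring_1 mat"
  assumes A: "A \<in> carrier_mat n n" and B: "B \<in> carrier_mat k k" and "k \<le> n"
    and AB: "\<And>i l. i < k \<Longrightarrow> l < k \<Longrightarrow> A $$ (i, l) = B $$ (i, l)"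
    and x: "x \<in> carrier_vec k"
  shows "(x @\<^sub>v 0\<^sub>v (n - k)) \<bullet> (A *\<^sub>v (x @\<^sub>v 0\<^sub>v (n - k))) = x \<bullet> (B *\<^sub>v x)"
proof -
  let ?z = "A *\<^sub>v (x @\<^sub>v 0\<^sub>v (n - k))"
  have "x @\<^sub>v 0\<^sub>v (n - k) \<in> carrier_vec n"
    using append_carrier_vec[OF x zero_carrier_vec[of "n - k"]] \<open>k \<le> n\<close> by simp
  then have "?z = vec_first ?z k @\<^sub>v vec_last ?z (n - k)"
    using A \<open>k \<le> n\<close> by (intro vec_first_last_append[symmetric]) auto
  then show ?thesis
    using x mult_mat_vec_zero_extension[OF assms]
    by (metis scalar_prod_append[of x k "0\<^sub>v (n - k)" "n - k"] vec_last_carrier vec_first_carrier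
        zero_carrier_vec scalar_prod_left_zero add_0_right)
qed

lemma mat_delete_last_index:
  assumes "A \<in> carrier_mat (Suc m) (Suc m)" and "i < m" and "l < m"
  shows "mat_delete A m m $$ (i, l) = A $$ (i, l)"
  using assms unfolding mat_delete_def by auto

lemma replace_col_carrier: "A \<in> carrier_mat n m \<Longrightarrow> replace_col A y k \<in> carrier_mat n m"
  unfolding replace_col_def by auto

lemma det_replace_last_col_unit_vec:
  fixes A :: "'a :: comm_ring_1 mat"
  assumes A: "A \<in> carrier_mat (Suc m) (Suc m)"
  shows "det (replace_col A (unit_vec (Suc m) m) m) = det (mat_delete A m m)"
proof -
  let ?R = "replace_col A (unit_vec (Suc m) m) m"
  have R: "?R \<in> carrier_mat (Suc m) (Suc m)" using replace_col_carrier[OF A] .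
  have "det ?R = (\<Sum>i<Suc m. ?R $$ (i, m) * cofactor ?R i m)"
    using laplace_expansion_column[OF R, of m] by simp
  also have "\<dots> = cofactor ?R m m"
    using A by (simp add: replace_col_def)
  also have "mat_delete ?R m m = mat_delete A m m"
    using A unfolding mat_delete_def replace_col_def by auto
  then have "cofactor ?R m m = det (mat_delete A m m)" by (simp add: cofactor_def)
  finally show ?thesis .
qed

(* With A' x' = y' one has y = A (x' @ 0) + \<delta> e_m, hence A^-1 y = (x' @ 0) + \<delta> A^-1 e_m;
   symmetry of A turns y \<bullet> A^-1 e_m into the last entry of A^-1 y. *)

lemma inverse_quadratic_form_last_split:
  fixes A :: "real mat"
  assumes A: "A \<in> carrier_mat (Suc m) (Suc m)" and sym: "transpose_mat A = A"
    and dA: "det A \<noteq> 0" and dA': "det (mat_delete A m m) \<noteq> 0"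
    and y: "y \<in> carrier_vec (Suc m)"
  obtains \<delta> where
    "y \<bullet> (mat_inv A *\<^sub>v y) = vec_first y m \<bullet> (mat_inv (mat_delete A m m) *\<^sub>v vec_first y m)
       + \<delta> * (mat_inv A *\<^sub>v y) $ m"
    and "(mat_inv A *\<^sub>v y) $ m = \<delta> * (mat_inv A *\<^sub>v unit_vec (Suc m) m) $ m"
proof -
  define A' y' where "A' = mat_delete A m m" and "y' = vec_first y m"
  define x' z where "x' = mat_inv A' *\<^sub>v y'" and "z = x' @\<^sub>v 0\<^sub>v 1"
  define e x w where "e = unit_vec (Suc m) m" and "x = mat_inv A *\<^sub>v y" and "w = mat_inv A *\<^sub>v e"
  define \<delta> where "\<delta> = y $ m - (A *\<^sub>v z) $ m"
  have A': "A' \<in> carrier_mat m m" using mat_delete_carrier[OF A] unfolding A'_def by simp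
  note inv = mat_inv_correct[OF A dA]
  have x': "x' \<in> carrier_vec m" using mat_inv_correct[OF A' dA'[folded A'_def]] by (simp add: x'_def y'_def)
  have z: "z \<in> carrier_vec (Suc m)" using append_carrier_vec[OF x' zero_carrier_vec[of 1]] by (simp add: z_def)
  have "vec_first (A *\<^sub>v z) m = A' *\<^sub>v x'"
    unfolding z_def using mult_mat_vec_zero_extension[OF A A' _ _ x'] mat_delete_last_index[OF A]
    by (simp add: A'_def)
  also have "\<dots> = y'" using mult_mat_inv_vec(1)[OF A' dA'[folded A'_def]] by (simp add: x'_def y'_def)
  finally have Az: "vec_first (A *\<^sub>v z) m = y'" .
  have "y = A *\<^sub>v z + \<delta> \<cdot>\<^sub>v e"
  proof (rule eq_vecI)
    fix i assume "i < dim_vec (A *\<^sub>v z + \<delta> \<cdot>\<^sub>v e)"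
    then have "i < m \<or> i = m" using A by (auto simp: e_def)
    then show "y $ i = (A *\<^sub>v z + \<delta> \<cdot>\<^sub>v e) $ i"
      using arg_cong[OF Az, of "\<lambda>v. v $ i"] A by (auto simp: e_def \<delta>_def y'_def vec_first_def)
  qed (use A y e_def in auto)
  then have "x = z + \<delta> \<cdot>\<^sub>v w"
    using inv A z
    by (simp add: x_def w_def e_def mult_add_distrib_mat_vec mult_mat_inv_vec(2)[OF A dA z] mult_mat_vec)
  then have xm: "x $ m = \<delta> * w $ m" and "y \<bullet> x = y \<bullet> z + \<delta> * (y \<bullet> w)"
    using y z inv(1) x' by (auto simp: z_def w_def e_def scalar_prod_add_distrib[of _ "Suc m"] append_vec_def)
  moreover have "y \<bullet> z = y' \<bullet> x'"
  proof -
    have "y = y' @\<^sub>v vec_last y 1" using y by (simp add: y'_def)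
    then show ?thesis using x' by (metis scalar_prod_append[of y' m _ 1] vec_first_carrier vec_last_carrier
        zero_carrier_vec scalar_prod_right_zero add_0_right y'_def z_def)
  qed
  moreover have "y \<bullet> w = x $ m"
    using transpose_vec_mult_scalar[OF inv(1), of e y] y
    by (simp add: w_def x_def e_def transpose_mat_inv_symmetric[OF A sym dA])
  ultimately show ?thesis using that[of \<delta>] by (simp add: x_def w_def e_def x'_def A'_def y'_def)
qed

lemma inverse_quadratic_form_increment:
  fixes A :: "real mat"
  assumes A: "A \<in> carrier_mat (Suc m) (Suc m)" and sym: "transpose_mat A = A"
    and dA: "det A \<noteq> 0" and dA': "det (mat_delete A m m) \<noteq> 0"
    and y: "y \<in> carrier_vec (Suc m)"
  shows "y \<bullet> (mat_inv A *\<^sub>v y) - vec_first y m \<bullet> (mat_inv (mat_delete A m m) *\<^sub>v vec_first y m)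
       = (det (replace_col A y m))\<^sup>2 / (det A * det (mat_delete A m m))"
proof -
  define x w where "x = mat_inv A *\<^sub>v y" and "w = mat_inv A *\<^sub>v unit_vec (Suc m) m"
  obtain \<delta> where form: "y \<bullet> x = vec_first y m \<bullet> (mat_inv (mat_delete A m m) *\<^sub>v vec_first y m) + \<delta> * x $ m"
    and xm: "x $ m = \<delta> * w $ m"
    using inverse_quadratic_form_last_split[OF assms] unfolding x_def w_def by blast
  note inv = mat_inv_correct[OF A dA]
  have "det (replace_col A y m) = x $ m * det A"
    using cramer_lemma_mat[OF A _, of x m] mult_mat_inv_vec(1)[OF A dA y] inv(1) y by (simp add: x_def)
  moreover have "det (mat_delete A m m) = w $ m * det A"
    using cramer_lemma_mat[OF A _, of w m] mult_mat_inv_vec(1)[OF A dA] inv(1)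
    by (simp add: w_def det_replace_last_col_unit_vec[OF A])
  ultimately show ?thesis
    using form xm dA dA' unfolding x_def[symmetric] by (simp add: field_simps power2_eq_square)
qed

lemma pos_def_mat_det_nonzero:
  assumes "pos_def_mat A"
  shows "det A \<noteq> 0"
proof
  assume "det A = 0"
  from assms obtain m where A: "A \<in> carrier_mat m m"
    and pos: "\<And>x. x \<in> carrier_vec m \<Longrightarrow> x \<noteq> 0\<^sub>v m \<Longrightarrow> x \<bullet> (A *\<^sub>v x) > 0"
    unfolding pos_def_mat_def by auto
  obtain x where "x \<in> carrier_vec m" "x \<noteq> 0\<^sub>v m" "A *\<^sub>v x = 0\<^sub>v m"
    using det_0_iff_vec_prod_zero[OF A] \<open>det A = 0\<close> by auto
  with pos[of x] show False by simp
qed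

lemma hankel_carrier [simp]: "hankel j f \<in> carrier_mat (Suc j) (Suc j)"
  unfolding hankel_def by simp

lemma transpose_hankel: "transpose_mat (hankel j f) = hankel j f"
  unfolding hankel_def by (rule eq_matI) (auto simp: add.commute)

lemma hankel_index: "l < Suc j \<Longrightarrow> k < Suc j \<Longrightarrow> hankel j f $$ (l, k) = f (l + k)"
  unfolding hankel_def by simp

lemma mat_delete_hankel: "mat_delete (hankel (Suc j) f) (Suc j) (Suc j) = hankel j f"
  unfolding hankel_def mat_delete_def by (rule eq_matI) auto

lemma pos_def_hankel_leading:
  assumes pd: "pos_def_mat (hankel n f)" and "j \<le> n"
  shows "pos_def_mat (hankel j f)"
proof -
  obtain m where H: "hankel n f \<in> carrier_mat m m"
    and pos: "\<And>z. z \<in> carrier_vec m \<Longrightarrow> z \<noteq> 0\<^sub>v m \<Longrightarrow> z \<bullet> (hankel n f *\<^sub>v z) > 0"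
    using pd unfolding pos_def_mat_def by blast
  have m: "m = Suc n" using carrier_matD(1)[OF H] carrier_matD(1)[OF hankel_carrier[of n f]] by simp
  have "x \<bullet> (hankel j f *\<^sub>v x) > 0" if x: "x \<in> carrier_vec (Suc j)" and "x \<noteq> 0\<^sub>v (Suc j)" for x
  proof -
    let ?z = "x @\<^sub>v 0\<^sub>v (Suc n - Suc j)"
    have z: "?z \<in> carrier_vec (Suc n)"
      using append_carrier_vec[OF x zero_carrier_vec[of "Suc n - Suc j"]] \<open>j \<le> n\<close> by simp
    have "vec_first ?z (Suc j) = x"
      using x by (intro eq_vecI) (auto simp: vec_first_def append_vec_def)
    moreover have "vec_first (0\<^sub>v (Suc n)) (Suc j) = (0\<^sub>v (Suc j) :: real vec)"
      using \<open>j \<le> n\<close> by (intro eq_vecI) (auto simp: vec_first_def)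
    ultimately have "?z \<noteq> 0\<^sub>v (Suc n)" using \<open>x \<noteq> 0\<^sub>v (Suc j)\<close> by force
    then have "?z \<bullet> (hankel n f *\<^sub>v ?z) > 0" using pos z m by blast
    moreover have "?z \<bullet> (hankel n f *\<^sub>v ?z) = x \<bullet> (hankel j f *\<^sub>v x)"
      by (rule quadratic_form_zero_extension[OF hankel_carrier[of n f] hankel_carrier[of j f] _ _ x])
        (use \<open>j \<le> n\<close> in \<open>auto simp: hankel_index\<close>)
    ultimately show ?thesis by simp
  qed
  then show ?thesis unfolding pos_def_mat_def using transpose_hankel hankel_carrier by blast
qed

definition hankel_border :: "nat \<Rightarrow> (nat \<Rightarrow> real) \<Rightarrow> real vec \<Rightarrow> real mat" where
  "hankel_border j f y = mat (Suc j) (Suc j) (\<lambda>(r, c). if r < j then f (r + c) else y $ c)"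

lemma det_hankel_border:
  "det (hankel_border j f y) = det (replace_col (hankel j f) y j)"
proof -
  have "hankel_border j f y = transpose_mat (replace_col (hankel j f) y j)"
    unfolding hankel_border_def replace_col_def hankel_def by (rule eq_matI) (auto simp: add.commute)
  then show ?thesis using det_transpose[OF replace_col_carrier[OF hankel_carrier]] by simp
qed

lemma hankel_inverse_form_increment:
  assumes y: "y \<in> carrier_vec (Suc j)" and d: "det (hankel j f) \<noteq> 0"
    and d': "det (mat_delete (hankel j f) j j) \<noteq> 0"
  shows "y \<bullet> (mat_inv (hankel j f) *\<^sub>v y)
       - vec_first y j \<bullet> (mat_inv (mat_delete (hankel j f) j j) *\<^sub>v vec_first y j)
     = (det (hankel_border j f y))\<^sup>2 / (det (hankel j f) * det (mat_delete (hankel j f) j j))"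
  unfolding det_hankel_border
  by (rule inverse_quadratic_form_increment[OF hankel_carrier transpose_hankel d d' y])

lemma hankel_inverse_form_Suc:
  assumes "y \<in> carrier_vec (Suc (Suc j))"
    and "det (hankel (Suc j) f) \<noteq> 0" and "det (hankel j f) \<noteq> 0"
  shows "y \<bullet> (mat_inv (hankel (Suc j) f) *\<^sub>v y)
       - vec_first y (Suc j) \<bullet> (mat_inv (hankel j f) *\<^sub>v vec_first y (Suc j))
     = (det (hankel_border (Suc j) f y))\<^sup>2 / (det (hankel (Suc j) f) * det (hankel j f))"
  using hankel_inverse_form_increment[of y "Suc j" f] assms unfolding mat_delete_hankel by blast

lemma hankel_inverse_form_0:
  assumes y: "y \<in> carrier_vec 1" and d: "det (hankel 0 f) \<noteq> 0"
  shows "y \<bullet> (mat_inv (hankel 0 f) *\<^sub>v y) = (det (hankel_border 0 f y))\<^sup>2 / det (hankel 0 f)"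
proof -
  let ?E = "mat_delete (hankel 0 f) 0 0"
  have E: "?E \<in> carrier_mat 0 0" using mat_delete_carrier[OF hankel_carrier[of 0 f]] by simp
  then have "det ?E = 1" by simp
  moreover have "vec_first y 0 \<bullet> (mat_inv ?E *\<^sub>v vec_first y 0) = 0"
    by (simp add: scalar_prod_def)
  ultimately show ?thesis
    using hankel_inverse_form_increment[OF _ d, of y] y by simp
qed

lemma T_carrier: "T j \<in> carrier_mat (Suc j) (Suc j)"
  unfolding T_def by simp

lemma T_mult_index:
  assumes B: "B \<in> carrier_mat (Suc j) n" and r: "r < Suc j" and c: "c < n"
  shows "(T j * B) $$ (r, c) = (if r = 0 then 0 else B $$ (r - 1, c))"
proof -
  have "(T j * B) $$ (r, c) = (\<Sum>k<Suc j. (if r = Suc k then 1 else 0) * B $$ (k, c))"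
    using B r c by (simp add: T_def scalar_prod_def lessThan_atLeast0)
  also have "\<dots> = (\<Sum>k<Suc j. if k = r - 1 \<and> r \<noteq> 0 then B $$ (k, c) else 0)"
    by (rule sum.cong) auto
  also have "\<dots> = (if r = 0 then 0 else B $$ (r - 1, c))"
    using r by (cases r) auto
  finally show ?thesis .
qed

(* T_j is the nilpotent shift, so R_j(x) = \<Sum>_k x^k T_j^k. *)

lemma R_eq_powers:
  "R j x = mat (Suc j) (Suc j) (\<lambda>(r, c). if c \<le> r then x ^ (r - c) else 0)"
proof -
  let ?L = "mat (Suc j) (Suc j) (\<lambda>(r, c). if c \<le> r then x ^ (r - c) else 0)"
  have L: "?L \<in> carrier_mat (Suc j) (Suc j)" by simp
  have M: "1\<^sub>m (Suc j) - x \<cdot>\<^sub>m T j \<in> carrier_mat (Suc j) (Suc j)" using T_carrier[of j] by auto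
  have "(1\<^sub>m (Suc j) - x \<cdot>\<^sub>m T j) * ?L = ?L - x \<cdot>\<^sub>m (T j * ?L)"
    using L T_carrier[of j]
    by (simp add: minus_mult_distrib_mat[OF one_carrier_mat smult_carrier_mat L]
        mult_smult_assoc_mat[OF T_carrier L])
  also have "\<dots> = 1\<^sub>m (Suc j)"
  proof (rule eq_matI)
    fix r c assume "r < dim_row (1\<^sub>m (Suc j) :: real mat)" "c < dim_col (1\<^sub>m (Suc j) :: real mat)"
    then have r: "r < Suc j" and c: "c < Suc j" by auto
    have entry: "(?L - x \<cdot>\<^sub>m (T j * ?L)) $$ (r, c) = ?L $$ (r, c) - x * (if r = 0 then 0 else ?L $$ (r - 1, c))"
      using T_mult_index[OF L r c] T_carrier[of j] r c by simp
    consider "r = c" | "c < r" | "r < c" by linarith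
    then show "(?L - x \<cdot>\<^sub>m (T j * ?L)) $$ (r, c) = 1\<^sub>m (Suc j) $$ (r, c)"
    proof cases
      case 1
      with r entry show ?thesis by auto
    next
      case 2
      then have "r - c = Suc (r - 1 - c)" by auto
      with 2 r c entry show ?thesis by simp
    next
      case 3
      with r c entry show ?thesis by simp
    qed
  qed (use T_carrier in auto)
  finally show ?thesis unfolding R_def by (rule mat_inv_eqI[OF M L])
qed

lemma R_carrier: "R j x \<in> carrier_mat (Suc j) (Suc j)"
  unfolding R_eq_powers by simp

lemma R_mult_vec_index:
  assumes k: "k < Suc j" and w: "w \<in> carrier_vec (Suc j)"
  shows "(R j x *\<^sub>v w) $ k = (\<Sum>l\<le>k. x ^ (k - l) * w $ l)"
proof -
  have "(R j x *\<^sub>v w) $ k = (\<Sum>l<Suc j. if l \<le> k then x ^ (k - l) * w $ l else 0)"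
    using k w unfolding R_eq_powers by (auto simp: scalar_prod_def lessThan_atLeast0 intro!: sum.cong)
  also have "\<dots> = (\<Sum>l \<in> {..<Suc j} \<inter> {..k}. x ^ (k - l) * w $ l)"
    by (simp add: sum.inter_restrict)
  also have "{..<Suc j} \<inter> {..k} = {..k}" using k by auto
  finally show ?thesis .
qed

lemma quadratic_form_congruence:
  fixes P N :: "'a :: comm_ring_1 mat"
  assumes P: "P \<in> carrier_mat n n" and N: "N \<in> carrier_mat n n" and w: "w \<in> carrier_vec n"
  shows "w \<bullet> ((transpose_mat P * N * P) *\<^sub>v w) = (P *\<^sub>v w) \<bullet> (N *\<^sub>v (P *\<^sub>v w))"
proof -
  have "(transpose_mat P * N * P) *\<^sub>v w = transpose_mat P *\<^sub>v (N *\<^sub>v (P *\<^sub>v w))"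
    using P N w by (simp add: assoc_mult_mat_vec[of _ n n _ n])
  then have "w \<bullet> ((transpose_mat P * N * P) *\<^sub>v w) = (transpose_mat P *\<^sub>v (N *\<^sub>v (P *\<^sub>v w))) \<bullet> w"
    using P N w by (simp add: comm_scalar_prod[of w n])
  also have "\<dots> = (N *\<^sub>v (P *\<^sub>v w)) \<bullet> (P *\<^sub>v w)"
    using transpose_vec_mult_scalar[OF P w] N P w by simp
  also have "\<dots> = (P *\<^sub>v w) \<bullet> (N *\<^sub>v (P *\<^sub>v w))"
    using N P w by (simp add: comm_scalar_prod[of _ n])
  finally show ?thesis .
qed

lemma u2_v_index:
  "l < Suc j \<Longrightarrow> (u2 a b s j + c \<cdot>\<^sub>v v j) $ l = (if l = 0 then u20 a b s + c else - s_hat a b s (l - 1))"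
  unfolding u2_def v_def by simp

lemma u2_v_carrier: "u2 a b s j + c \<cdot>\<^sub>v v j \<in> carrier_vec (Suc j)"
  unfolding u2_def v_def by simp

lemma e2_eq: "e2 a b s x j = - (R j x *\<^sub>v (u2 a b s j + (x * s 0) \<cdot>\<^sub>v v j))"
proof (rule eq_vecI)
  let ?w = "u2 a b s j + (x * s 0) \<cdot>\<^sub>v v j"
  fix c assume "c < dim_vec (- (R j x *\<^sub>v ?w))"
  then have c: "c < Suc j" using R_carrier[of j x] by simp
  have "e2 a b s x j $ c = - (?w \<bullet> row (R j x) c)"
    unfolding e2_def using c R_carrier[of j x] u2_v_carrier[of a b s j]
    by (simp add: mat_of_rows_def scalar_prod_def)
  also have "\<dots> = - (R j x *\<^sub>v ?w) $ c"
    using c R_carrier[of j x] u2_v_carrier[of a b s j] by (simp add: comm_scalar_prod[of _ "Suc j"])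
  finally show "e2 a b s x j $ c = (- (R j x *\<^sub>v ?w)) $ c" using c R_carrier[of j x] by simp
qed (use R_carrier in \<open>simp add: e2_def mat_of_rows_def\<close>)

lemma e2_carrier: "e2 a b s x j \<in> carrier_vec (Suc j)"
  unfolding e2_eq using mult_mat_vec_carrier[OF R_carrier u2_v_carrier] by simp

lemma e2_index:
  assumes "c < Suc j"
  shows "e2 a b s x j $ c = - (\<Sum>l\<le>c. x ^ (c - l) * (if l = 0 then u20 a b s + x * s 0 else - s_hat a b s (l - 1)))"
  using assms R_carrier[of j x]
  by (simp add: e2_eq R_mult_vec_index[OF assms u2_v_carrier] u2_v_index)

lemma vec_first_e2: "vec_first (e2 a b s x (Suc j)) (Suc j) = e2 a b s x j"
  by (rule eq_vecI) (auto simp: vec_first_def e2_index e2_carrier[THEN carrier_vecD])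

lemma lam_eq_e2_form:
  assumes "det (H2 a b s j) \<noteq> 0"
  shows "lam a b s j = e2 a b s a j \<bullet> (mat_inv (H2 a b s j) *\<^sub>v e2 a b s a j)"
proof -
  let ?N = "mat_inv (H2 a b s j)" and ?y = "R j a *\<^sub>v (u2 a b s j + (a * s 0) \<cdot>\<^sub>v v j)"
  have N: "?N \<in> carrier_mat (Suc j) (Suc j)"
    using mat_inv_correct(1)[OF _ assms] by (simp add: H2_def)
  have y: "?y \<in> carrier_vec (Suc j)" using mult_mat_vec_carrier[OF R_carrier u2_v_carrier] .
  have "lam a b s j = ?y \<bullet> (?N *\<^sub>v ?y)"
    unfolding lam_def Let_def by (rule quadratic_form_congruence[OF R_carrier N u2_v_carrier])
  also have "\<dots> = (- ?y) \<bullet> (?N *\<^sub>v (- ?y))"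
  proof -
    have "?N *\<^sub>v (- ?y) = - (?N *\<^sub>v ?y)"
      using carrier_matD[OF N] carrier_vecD[OF y] by (intro eq_vecI) auto
    moreover have "dim_vec (?N *\<^sub>v ?y) = dim_vec ?y"
      using carrier_vecD[OF mult_mat_vec_carrier[OF N y]] carrier_vecD[OF y] by simp
    ultimately show ?thesis by simp
  qed
  finally show ?thesis unfolding e2_eq .
qed

lemma R_mult_v: "R j x *\<^sub>v v j = vec (Suc j) (\<lambda>c. x ^ c)"
proof (rule eq_vecI)
  fix c assume "c < dim_vec (vec (Suc j) (\<lambda>c. x ^ c))"
  then have c: "c < Suc j" by simp
  have "(\<Sum>l\<le>c. x ^ (c - l) * v j $ l) = (\<Sum>l\<le>c. if l = 0 then x ^ c else 0)"
    using c by (intro sum.cong) (auto simp: v_def)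
  then show "(R j x *\<^sub>v v j) $ c = vec (Suc j) (\<lambda>c. x ^ c) $ c"
    using c by (simp add: R_mult_vec_index v_def)
qed (use R_carrier in auto)

lemma mu_eq_powers_form:
  assumes "det (K1 b s j) \<noteq> 0"
  shows "mu a b s j = vec (Suc j) (\<lambda>c. a ^ c) \<bullet> (mat_inv (K1 b s j) *\<^sub>v vec (Suc j) (\<lambda>c. a ^ c))"
proof -
  have N: "mat_inv (K1 b s j) \<in> carrier_mat (Suc j) (Suc j)"
    using mat_inv_correct(1)[OF _ assms] by (simp add: K1_def)
  have "v j \<in> carrier_vec (Suc j)" by (simp add: v_def)
  from quadratic_form_congruence[OF R_carrier N this] show ?thesis
    unfolding mu_def R_mult_v .
qed

lemma E2_eq_hankel_border: "E2 a b s x j = hankel_border j (s_hat a b s) (e2 a b s x j)"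
  unfolding E2_def hankel_border_def ..

lemma D3_eq_hankel_border:
  "D3 b s x j = hankel_border j (\<lambda>k. b * s k - s (k + 1)) (vec (Suc j) (\<lambda>c. x ^ c))"
  unfolding D3_def hankel_border_def by (rule eq_matI) auto

lemma l_tilde_0:
  assumes "det (H2 a b s 0) \<noteq> 0"
  shows "l_tilde a b s 0 = (det (E2 a b s a 0))\<^sup>2 / det (H2 a b s 0)"
proof -
  have "e2 a b s a 0 \<in> carrier_vec 1" using e2_carrier[of a b s a 0] by simp
  from hankel_inverse_form_0[OF this] assms show ?thesis
    by (simp add: l_tilde_def lam_eq_e2_form E2_eq_hankel_border H2_def)
qed

lemma l_tilde_Suc:
  assumes "det (H2 a b s (Suc j)) \<noteq> 0" and "det (H2 a b s j) \<noteq> 0"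
  shows "l_tilde a b s (Suc j)
    = (det (E2 a b s a (Suc j)))\<^sup>2 / (det (H2 a b s (Suc j)) * det (H2 a b s j))"
  using hankel_inverse_form_Suc[OF e2_carrier[of a b s a "Suc j"]] assms
  by (simp add: l_tilde_def lam_eq_e2_form vec_first_e2 E2_eq_hankel_border H2_def)

lemma m_tilde_0:
  assumes "det (K1 b s 0) \<noteq> 0"
  shows "m_tilde a b s 0 = 1 / (b * s 0 - s 1)"
proof -
  have "K1 b s 0 = (b * s 0 - s 1) \<cdot>\<^sub>m 1\<^sub>m 1" and "D3 b s a 0 = 1\<^sub>m 1"
    unfolding K1_def hankel_def D3_def by (auto intro!: eq_matI)
  then show ?thesis
    using hankel_inverse_form_0[of "vec 1 (\<lambda>c. a ^ c)", of "\<lambda>k. b * s k - s (k + 1)"] assms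
    by (simp add: m_tilde_def mu_eq_powers_form D3_eq_hankel_border K1_def)
qed

lemma m_tilde_Suc:
  assumes "det (K1 b s (Suc j)) \<noteq> 0" and "det (K1 b s j) \<noteq> 0"
  shows "m_tilde a b s (Suc j)
    = (det (D3 b s a (Suc j)))\<^sup>2 / (det (K1 b s (Suc j)) * det (K1 b s j))"
proof -
  have "vec_first (vec (Suc (Suc j)) (\<lambda>c. a ^ c)) (Suc j) = vec (Suc j) (\<lambda>c. a ^ c)"
    by (auto simp: vec_first_def)
  then show ?thesis
    using hankel_inverse_form_Suc[of "vec (Suc (Suc j)) (\<lambda>c. a ^ c)" j "\<lambda>k. b * s k - s (k + 1)"] assms
    by (simp add: m_tilde_def mu_eq_powers_form D3_eq_hankel_border K1_def)
qed

(* Only the nonsingularity of the leading sections of H_2 and K_1 enters. *)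
theorem mainTheorem13:
  fixes a b :: real and s :: "nat \<Rightarrow> real" and n :: nat
  assumes "n \<ge> 1" and "a < b"
    and "pos_def_mat (H1 s n)" and "pos_def_mat (H2 a b s (n - 1))"
    and "pos_def_mat (K1 b s n)" and "pos_def_mat (K2 a s n)"
  shows "l_tilde a b s 0 = (det (E2 a b s a 0))\<^sup>2 / det (H2 a b s 0)
     \<and> m_tilde a b s 0 = 1 / (b * s 0 - s 1)
     \<and> (\<forall>j. 1 \<le> j \<and> j \<le> n - 1 \<longrightarrow>
          l_tilde a b s j = (det (E2 a b s a j))\<^sup>2 / (det (H2 a b s j) * det (H2 a b s (j - 1))))
     \<and> (\<forall>j. 1 \<le> j \<and> j \<le> n \<longrightarrow>
          m_tilde a b s j = (det (D3 b s a j))\<^sup>2 / (det (K1 b s j) * det (K1 b s (j - 1))))"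
proof -
  have dH: "det (H2 a b s j) \<noteq> 0" if "j \<le> n - 1" for j
    using pos_def_mat_det_nonzero[OF pos_def_hankel_leading[OF assms(4)[unfolded H2_def] that]]
    by (simp add: H2_def)
  have dK: "det (K1 b s j) \<noteq> 0" if "j \<le> n" for j
    using pos_def_mat_det_nonzero[OF pos_def_hankel_leading[OF assms(5)[unfolded K1_def] that]]
    by (simp add: K1_def)
  have "l_tilde a b s j = (det (E2 a b s a j))\<^sup>2 / (det (H2 a b s j) * det (H2 a b s (j - 1)))"
    if "1 \<le> j" "j \<le> n - 1" for j
    using that l_tilde_Suc[of a b s "j - 1"] dH[of j] dH[of "j - 1"] by (cases j) auto
  moreover have "m_tilde a b s j = (det (D3 b s a j))\<^sup>2 / (det (K1 b s j) * det (K1 b s (j - 1)))"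
    if "1 \<le> j" "j \<le> n" for j
    using that m_tilde_Suc[of b s "j - 1" a] dK[of j] dK[of "j - 1"] by (cases j) auto
  ultimately show ?thesis
    using l_tilde_0[OF dH] m_tilde_0[OF dK] by simp
qed

end
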